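(* Let $M=\{1,\dots,m\}$ carry the measure $\mu$ with atoms of positive masses $\mu_1,\dots,\mu_m$, and $N=\{1,\dots,n\}$ the measure $\nu$ with atoms of positive masses $\nu_1,\dots,\nu_n$. Let $t>0$ and $1\le q<p\le\infty$, $\alpha=1/q-1/p$, and $C(p,q)=(1-q/p)^{1/q}$. For real $m\times n$ matrices $a$ let $\|a\|$ be the $L^{p,\infty}(\mu)$ quasi-norm of $i\mapsto\big(\sum_{j\in N}|a(i,j)|^q\nu_j\big)^{1/q}$, let $\|a\|^{\top}$ be the $L^{p,\infty}(\nu)$ quasi-norm of $j\mapsto\big(\sum_{i\in M}|a(i,j)|^q\mu_i\big)^{1/q}$, let $\|a\|_{\ell^q}=\big(\sum_{i,j}|a(i,j)|^q\mu_i\nu_j\big)^{1/q}$, and $$|||a|||_{p,q,t}=\sup_{E,F}\big(\mu(E)^{\alpha}\vee t^{-1}\nu(F)^{\alpha}\big)^{-1}\|1_{E\times F}\cdot a\|_{\ell^q},$$ the supremum over nonempty $E\subset M$, $F\subset N$. Let $K_{p,q,t}(a)=\inf\{\|b\|+t\|c\|^{\top}: a=b+c\}$ (the $K_t$-functional of the couple $\ell^{p,\infty}_m(\ell^q_n),\ \ell^{p,\infty}_n(\ell^q_m)$). Then for every matrix $a$ $$C(p,q)\,|||a|||_{p,q,t}\le K_{p,q,t}(a)\le 2\,|||a|||_{p,q,t}.$$ More precisely, if $|||a|||_{p,q,t}\le1$ there are $A,B$ with $M\times N=A\cup B$, $A\cap B=\emptyset$, and $\|1_A\cdot a\|\le1$,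 $\|1_B\cdot a\|^{\top}\le1/t$.
   Context: For a nonnegative function $g$ on a measure space, $g^*(s)=\inf\{\lambda>0:\text{measure}\{g>\lambda\}\le s\}$ is its nonincreasing rearrangement and $\|g\|_{L^{p,\infty}}=\sup_{s>0}s^{1/p}g^*(s)$ (for $p=\infty$ this is the sup norm). $1_S$ is the indicator of $S$, $\cdot$ is entrywise multiplication, $u\vee v=\max(u,v)$. *)

theory Defs
  imports Complex_Main "HOL-Library.Extended_Real"
begin

definition rearr :: "(nat \<Rightarrow> real) \<Rightarrow> nat set \<Rightarrow> (nat \<Rightarrow> real) \<Rightarrow> real \<Rightarrow> real" where
  "rearr mu S g s = Inf {lam. lam > 0 \<and> (\<Sum>i\<in>{i\<in>S. g i > lam}. mu i) \<le> s}"

definition weak_norm :: "(nat \<Rightarrow> real) \<Rightarrow> nat set \<Rightarrow> ereal \<Rightarrow> (nat \<Rightarrow> real) \<Rightarrow> real" where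
  "weak_norm mu S p g =
     (if p = \<infinity> then (SUP i\<in>S. g i)
      else (SUP s\<in>{0<..}. s powr (1 / real_of_ereal p) * rearr mu S g s))"

definition inv_exp :: "ereal \<Rightarrow> real" where
  "inv_exp p = (if p = \<infinity> then 0 else 1 / real_of_ereal p)"

definition mask :: "(nat \<times> nat) set \<Rightarrow> (nat \<Rightarrow> nat \<Rightarrow> real) \<Rightarrow> nat \<Rightarrow> nat \<Rightarrow> real" where
  "mask A a = (\<lambda>i j. if (i, j) \<in> A then a i j else 0)"

definition row_norm :: "nat \<Rightarrow> nat \<Rightarrow> (nat \<Rightarrow> real) \<Rightarrow> (nat \<Rightarrow> real) \<Rightarrow> ereal \<Rightarrow> real
    \<Rightarrow> (nat \<Rightarrow> nat \<Rightarrow> real) \<Rightarrow> real" where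
  "row_norm m n mu nu p q a =
     weak_norm mu {1..m} p (\<lambda>i. (\<Sum>j\<in>{1..n}. \<bar>a i j\<bar> powr q * nu j) powr (1 / q))"

definition col_norm :: "nat \<Rightarrow> nat \<Rightarrow> (nat \<Rightarrow> real) \<Rightarrow> (nat \<Rightarrow> real) \<Rightarrow> ereal \<Rightarrow> real
    \<Rightarrow> (nat \<Rightarrow> nat \<Rightarrow> real) \<Rightarrow> real" where
  "col_norm m n mu nu p q a =
     weak_norm nu {1..n} p (\<lambda>j. (\<Sum>i\<in>{1..m}. \<bar>a i j\<bar> powr q * mu i) powr (1 / q))"

definition lq_norm :: "nat \<Rightarrow> nat \<Rightarrow> (nat \<Rightarrow> real) \<Rightarrow> (nat \<Rightarrow> real) \<Rightarrow> real
    \<Rightarrow> (nat \<Rightarrow> nat \<Rightarrow> real) \<Rightarrow> real" where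
  "lq_norm m n mu nu q a =
     (\<Sum>i\<in>{1..m}. \<Sum>j\<in>{1..n}. \<bar>a i j\<bar> powr q * mu i * nu j) powr (1 / q)"

definition triple_norm :: "nat \<Rightarrow> nat \<Rightarrow> (nat \<Rightarrow> real) \<Rightarrow> (nat \<Rightarrow> real) \<Rightarrow> ereal \<Rightarrow> real
    \<Rightarrow> real \<Rightarrow> (nat \<Rightarrow> nat \<Rightarrow> real) \<Rightarrow> real" where
  "triple_norm m n mu nu p q t a =
     (let alph = 1 / q - inv_exp p in
      SUP EF\<in>{(E, F). E \<subseteq> {1..m} \<and> E \<noteq> {} \<and> F \<subseteq> {1..n} \<and> F \<noteq> {}}.
        lq_norm m n mu nu q (mask (fst EF \<times> snd EF) a) /
        max ((\<Sum>i\<in>fst EF. mu i) powr alph) ((\<Sum>j\<in>snd EF. nu j) powr alph / t))"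

definition K_func :: "nat \<Rightarrow> nat \<Rightarrow> (nat \<Rightarrow> real) \<Rightarrow> (nat \<Rightarrow> real) \<Rightarrow> ereal \<Rightarrow> real
    \<Rightarrow> real \<Rightarrow> (nat \<Rightarrow> nat \<Rightarrow> real) \<Rightarrow> real" where
  "K_func m n mu nu p q t a =
     Inf {row_norm m n mu nu p q b + t * col_norm m n mu nu p q c | b c.
            \<forall>i\<in>{1..m}. \<forall>j\<in>{1..n}. a i j = b i j + c i j}"

definition Cpq :: "ereal \<Rightarrow> real \<Rightarrow> real" where
  "Cpq p q = (1 - q * inv_exp p) powr (1 / q)"

end

theory Submission
  imports Defs "HOL-Analysis.Convex"
begin

text \<open>
  Call g weakly bounded by W with exponent \<theta> if every nonempty set E of atoms contains a
  point where g \<le> W \<mu>(E)^(-\<theta>); on a finite atomic space this is exactly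
  \<parallel>g\<parallel>_{L^{1/\<theta>,\<infinity>}} \<le> W.

  Lower bound: if the row function of b is weakly bounded by W, peel off from E one row at
  a time, always a row realising the bound for the remaining set.  Comparing with the tangent
  of the concave function x \<mapsto> x^\<beta>, \<beta> = 1 - q/p, gives
  \<beta> \<parallel>1_{E\<times>F} b\<parallel>_q^q \<le> W^q \<mu>(E)^\<beta>, i.e. C(p,q) \<parallel>1_{E\<times>F} b\<parallel>_q \<le> \<parallel>b\<parallel> \<mu>(E)^\<alpha>.  The same holds
  for columns, and Minkowski's inequality for a = b + c gives C(p,q) |||a||| \<le> \<parallel>b\<parallel> + t \<parallel>c\<parallel>^T.

  Upper bound: if |||a||| \<le> \<tau>, every rectangle E \<times> F carries l^q-mass at most
  max(\<tau>^q \<mu>(E)^\<beta>, (\<tau>/t)^q \<nu>(F)^\<beta>).  Averaging over M \<times> N shows that some row i is light,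
  \<Sum>_j |a_ij|^q \<nu>_j \<le> \<tau>^q \<mu>(M)^(\<beta>-1), or some column is light in the same sense.  A light
  line goes entirely to A (resp. B) and is removed; induction on the number of lines yields
  the partition, and a = 1_A a + 1_B a gives K \<le> 2 |||a|||.
\<close>

lemma powr_le_powr_base_iff: "0 < q \<Longrightarrow> 0 \<le> x \<Longrightarrow> 0 \<le> y \<Longrightarrow> x powr q \<le> y powr q \<longleftrightarrow> x \<le> y"
  for x y q :: real
  by (meson less_imp_le not_le powr_less_mono2 powr_mono2)

lemma powr_tangent_le:
  fixes x y b :: real
  assumes "0 \<le> y" "0 < x" "0 < b" "b \<le> 1"
  shows "b * (x - y) * x powr (b - 1) \<le> x powr b - y powr b"
proof -
  have x: "x * x powr (b - 1) = x powr b"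
    using assms by (simp add: powr_mult_base)
  have "y powr b \<le> x powr (b - 1) * ((1 - b) * x + b * y)"
  proof (cases "y = 0")
    case False
    have "y powr b = x powr (b - 1) * (x powr (1 - b) * y powr b)"
      using assms by (simp add: mult.assoc[symmetric] flip: powr_add)
    also have "\<dots> \<le> x powr (b - 1) * ((1 - b) * x + b * y)"
      using Youngs_inequality_0[of "1 - b" b x y] assms False by (intro mult_left_mono) auto
    finally show ?thesis .
  qed (use assms in auto)
  then show ?thesis
    using x by (simp add: algebra_simps)
qed

lemma powr_max: "0 \<le> x \<Longrightarrow> 0 \<le> y \<Longrightarrow> 0 \<le> r \<Longrightarrow> max x y powr r = max (x powr r) (y powr r)"
  for x y r :: real
  by (cases "x \<le> y") (auto simp: max_def powr_mono2 order_antisym)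

lemma powr_root_le:
  fixes c s W x b q :: real
  assumes "0 < q" "0 \<le> c" "0 \<le> s" "0 \<le> W" "c * s \<le> W powr q * x powr b"
  shows "c powr (1 / q) * s powr (1 / q) \<le> W * x powr (b / q)"
proof -
  have "c powr (1 / q) * s powr (1 / q) = (c * s) powr (1 / q)"
    using assms by (simp add: powr_mult)
  also have "\<dots> \<le> (W powr q * x powr b) powr (1 / q)"
    using assms by (intro powr_mono2) auto
  also have "\<dots> = W * x powr (b / q)"
    using assms by (simp add: powr_mult powr_powr)
  finally show ?thesis .
qed

lemma powr_convex_combination_le:
  fixes a b \<theta> q :: real
  assumes "0 \<le> a" "0 \<le> b" "0 \<le> \<theta>" "\<theta> \<le> 1" "1 \<le> q"
  shows "((1 - \<theta>) * a + \<theta> * b) powr q \<le> (1 - \<theta>) * a powr q + \<theta> * b powr q"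
proof -
  have shrink: "(z * x) powr q \<le> z * x powr q" if "0 \<le> z" "z \<le> 1" "0 \<le> x" for z x :: real
  proof -
    have "z powr q \<le> z"
      using that assms(5) powr_le_one_le[of z q] by (cases "z = 0") auto
    then show ?thesis
      using that by (simp add: powr_mult mult_right_mono)
  qed
  consider "a = 0" | "b = 0" | "a > 0" "b > 0"
    using assms by linarith
  then show ?thesis
  proof cases
    case 1
    then show ?thesis using shrink[of \<theta> b] assms by simp
  next
    case 2
    then show ?thesis using shrink[of "1 - \<theta>" a] assms by simp
  next
    case 3
    then show ?thesis
      using convex_onD[OF powr_convex[OF assms(5)], of \<theta> a b] assms by simp
  qed
qed

section \<open>Weakly bounded functions\<close>

lemma sum_pos_subset:
  fixes mu :: "'a \<Rightarrow> real"
  assumes "finite S" "\<forall>i\<in>S. mu i > 0" "E \<subseteq> S" "E \<noteq> {}"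
  shows "sum mu E > 0"
  using assms by (intro sum_pos) (auto intro: finite_subset)

definition weak_bounded :: "('a \<Rightarrow> real) \<Rightarrow> 'a set \<Rightarrow> real \<Rightarrow> real \<Rightarrow> ('a \<Rightarrow> real) \<Rightarrow> bool" where
  "weak_bounded mu S \<theta> W g \<longleftrightarrow> (\<forall>E\<subseteq>S. E \<noteq> {} \<longrightarrow> (\<exists>i\<in>E. g i \<le> W * sum mu E powr - \<theta>))"

lemma weak_boundedD:
  "weak_bounded mu S \<theta> W g \<Longrightarrow> E \<subseteq> S \<Longrightarrow> E \<noteq> {} \<Longrightarrow> \<exists>i\<in>E. g i \<le> W * sum mu E powr - \<theta>"
  by (simp add: weak_bounded_def)

lemma weak_bounded_empty [simp]: "weak_bounded mu {} \<theta> W g"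
  by (simp add: weak_bounded_def)

lemma weak_bounded_zero: "W \<ge> 0 \<Longrightarrow> weak_bounded mu S \<theta> W (\<lambda>_. 0)"
  by (auto simp: weak_bounded_def)

lemma weak_bounded_cong:
  "(\<And>i. i \<in> S \<Longrightarrow> g i = g' i) \<Longrightarrow> weak_bounded mu S \<theta> W g \<longleftrightarrow> weak_bounded mu S \<theta> W g'"
  by (force simp: weak_bounded_def subset_iff)

lemma weak_bounded_insert:
  assumes bounded: "weak_bounded mu S \<theta> W g" and agree: "\<forall>i\<in>S. g' i = g i"
    and fin: "finite S" and mu: "\<forall>i\<in>insert x S. mu i > 0" and "\<theta> \<ge> 0" "W \<ge> 0"
    and x: "g' x \<le> W * sum mu (insert x S) powr - \<theta>"
  shows "weak_bounded mu (insert x S) \<theta> W g'"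
  unfolding weak_bounded_def
proof (intro allI impI)
  fix E assume E: "E \<subseteq> insert x S" "E \<noteq> {}"
  show "\<exists>i\<in>E. g' i \<le> W * sum mu E powr - \<theta>"
  proof (cases "x \<in> E")
    case True
    have "sum mu (insert x S) powr - \<theta> \<le> sum mu E powr - \<theta>"
      using assms E by (intro powr_mono2' sum_mono2 sum_pos_subset[of "insert x S"]) auto
    then show ?thesis
      using True x \<open>W \<ge> 0\<close> by (meson mult_left_mono order_trans)
  next
    case False
    then have "E \<subseteq> S"
      using E by blast
    then show ?thesis
      using weak_boundedD[OF bounded _ E(2)] agree by (metis subsetD)
  qed
qed

lemma weak_bounded_powr_iff:
  assumes "q > 0" "W \<ge> 0" "\<forall>i\<in>S. g i \<ge> 0"
  shows "weak_bounded mu S (q * \<theta>) (W powr q) (\<lambda>i. g i powr q) \<longleftrightarrow> weak_bounded mu S \<theta> W g"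
proof -
  have "W powr q * x powr - (q * \<theta>) = (W * x powr - \<theta>) powr q" for x
    using assms by (simp add: powr_mult powr_powr mult.commute)
  then have "g i powr q \<le> W powr q * x powr - (q * \<theta>) \<longleftrightarrow> g i \<le> W * x powr - \<theta>" if "i \<in> S" for i x
    using assms that by (simp add: powr_le_powr_base_iff)
  then show ?thesis
    unfolding weak_bounded_def by (meson subsetD)
qed

lemma weak_bounded_sum_le:
  assumes fin: "finite S" and mu: "\<forall>i\<in>S. mu i > 0" and bounded: "weak_bounded mu S (1 - b) W g"
    and b: "0 < b" "b \<le> 1" and W: "W \<ge> 0" and E: "E \<subseteq> S"
  shows "b * (\<Sum>i\<in>E. mu i * g i) \<le> W * sum mu E powr b"
  using finite_subset[OF E fin]
proof (induction rule: finite_remove_induct)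
  case (remove A)
  then have "A \<subseteq> S" using E by blast
  then obtain i\<^sub>0 where i\<^sub>0: "i\<^sub>0 \<in> A" and small: "g i\<^sub>0 \<le> W * sum mu A powr (b - 1)"
    using weak_boundedD[OF bounded _ remove.hyps(2)] by (auto simp: algebra_simps)
  define x where "x = sum mu A"
  define y where "y = sum mu (A - {i\<^sub>0})"
  have "mu i\<^sub>0 > 0"
    using mu \<open>A \<subseteq> S\<close> i\<^sub>0 by auto
  moreover have "y \<ge> 0"
    unfolding y_def using mu \<open>A \<subseteq> S\<close> by (intro sum_nonneg) (auto simp: less_imp_le subset_iff)
  moreover have x: "x = mu i\<^sub>0 + y"
    unfolding x_def y_def using remove.hyps(1) i\<^sub>0 by (rule sum.remove)
  ultimately have "x > 0" by simp
  have "b * (\<Sum>i\<in>A. mu i * g i) = b * mu i\<^sub>0 * g i\<^sub>0 + b * (\<Sum>i\<in>A - {i\<^sub>0}. mu i * g i)"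
    using remove.hyps(1) i\<^sub>0 by (simp add: sum.remove distrib_left)
  also have "\<dots> \<le> b * mu i\<^sub>0 * (W * x powr (b - 1)) + W * y powr b"
    using remove.IH[OF i\<^sub>0] small b \<open>mu i\<^sub>0 > 0\<close> unfolding x_def y_def
    by (intro add_mono mult_left_mono) simp_all
  also have "\<dots> = W * (b * (x - y) * x powr (b - 1) + y powr b)"
    using x by (simp add: algebra_simps)
  also have "\<dots> \<le> W * x powr b"
    using powr_tangent_le[of y x b] \<open>y \<ge> 0\<close> \<open>x > 0\<close> b W by (intro mult_left_mono) auto
  finally show ?case unfolding x_def .
qed simp

section \<open>Splitting a matrix into a row-bounded and a column-bounded part\<close>

lemma exists_le_weighted_average:
  fixes f mu :: "'a \<Rightarrow> real"
  assumes "finite M" "M \<noteq> {}" "\<forall>i\<in>M. mu i > 0" "(\<Sum>i\<in>M. mu i * f i) \<le> c * sum mu M"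
  shows "\<exists>i\<in>M. f i \<le> c"
proof (rule ccontr)
  assume "\<not> ?thesis"
  then have "(\<Sum>i\<in>M. mu i * c) < (\<Sum>i\<in>M. mu i * f i)"
    using assms by (intro sum_strict_mono) auto
  moreover have "c * sum mu M = (\<Sum>i\<in>M. mu i * c)"
    by (simp add: sum_distrib_left mult.commute)
  ultimately show False
    using assms(4) by linarith
qed

lemma exists_light_row_or_column:
  fixes v :: "'a \<Rightarrow> 'b \<Rightarrow> real"
  assumes "finite M" "M \<noteq> {}" "finite N" "N \<noteq> {}" "\<forall>i\<in>M. mu i > 0" "\<forall>j\<in>N. nu j > 0"
    and total: "(\<Sum>i\<in>M. \<Sum>j\<in>N. v i j * mu i * nu j)
                  \<le> max (X * sum mu M powr (1 - \<theta>)) (Y * sum nu N powr (1 - \<theta>))"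
  shows "(\<exists>i\<in>M. (\<Sum>j\<in>N. v i j * nu j) \<le> X * sum mu M powr - \<theta>)
       \<or> (\<exists>j\<in>N. (\<Sum>i\<in>M. v i j * mu i) \<le> Y * sum nu N powr - \<theta>)"
proof -
  have split_powr: "sum w S powr (1 - \<theta>) = sum w S * sum w S powr - \<theta>"
    if "finite S" "S \<noteq> {}" "\<forall>i\<in>S. w i > 0" for S and w :: "'c \<Rightarrow> real"
    using sum_pos[of S w] that by (simp add: powr_mult_base)
  have rows: "(\<Sum>i\<in>M. \<Sum>j\<in>N. v i j * mu i * nu j) = (\<Sum>i\<in>M. mu i * (\<Sum>j\<in>N. v i j * nu j))"
    by (simp add: sum_distrib_left mult_ac)
  have cols: "(\<Sum>i\<in>M. \<Sum>j\<in>N. v i j * mu i * nu j) = (\<Sum>j\<in>N. nu j * (\<Sum>i\<in>M. v i j * mu i))"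
    by (subst sum.swap) (simp add: sum_distrib_left mult_ac)
  show ?thesis
  proof (cases "X * sum mu M powr (1 - \<theta>) \<ge> Y * sum nu N powr (1 - \<theta>)")
    case True
    then have "(\<Sum>i\<in>M. mu i * (\<Sum>j\<in>N. v i j * nu j)) \<le> (X * sum mu M powr - \<theta>) * sum mu M"
      using total rows split_powr[of M mu] assms by (simp add: mult_ac)
    then show ?thesis
      using exists_le_weighted_average[of M mu "\<lambda>i. \<Sum>j\<in>N. v i j * nu j"] assms by blast
  next
    case False
    then have "(\<Sum>j\<in>N. nu j * (\<Sum>i\<in>M. v i j * mu i)) \<le> (Y * sum nu N powr - \<theta>) * sum nu N"
      using total cols split_powr[of N nu] assms by (simp add: mult_ac)
    then show ?thesis
      using exists_le_weighted_average[of N nu "\<lambda>j. \<Sum>i\<in>M. v i j * mu i"] assms by blast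
  qed
qed

definition weak_split ::
    "('a \<Rightarrow> real) \<Rightarrow> ('b \<Rightarrow> real) \<Rightarrow> 'a set \<Rightarrow> 'b set \<Rightarrow> real \<Rightarrow> real \<Rightarrow> real
      \<Rightarrow> ('a \<Rightarrow> 'b \<Rightarrow> real) \<Rightarrow> ('a \<times> 'b) set \<Rightarrow> bool" where
  "weak_split mu nu M N \<theta> X Y v A \<longleftrightarrow>
     weak_bounded mu M \<theta> X (\<lambda>i. \<Sum>j\<in>N. (if (i, j) \<in> A then v i j else 0) * nu j) \<and>
     weak_bounded nu N \<theta> Y (\<lambda>j. \<Sum>i\<in>M. (if (i, j) \<in> A then 0 else v i j) * mu i)"

lemma weak_split_transpose:
  "weak_split mu nu M N \<theta> X Y v A \<Longrightarrow>
     weak_split nu mu N M \<theta> Y X (\<lambda>j i. v i j) {(j, i). (i, j) \<notin> A}"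
  by (simp add: weak_split_def if_conn(4) conj_commute)

lemma weak_split_insert_row:
  assumes split: "weak_split mu nu M N \<theta> X Y v A"
    and "i\<^sub>0 \<notin> M" "finite M" "\<forall>i\<in>insert i\<^sub>0 M. mu i > 0" "\<theta> \<ge> 0" "X \<ge> 0"
    and light: "(\<Sum>j\<in>N. v i\<^sub>0 j * nu j) \<le> X * sum mu (insert i\<^sub>0 M) powr - \<theta>"
  shows "weak_split mu nu (insert i\<^sub>0 M) N \<theta> X Y v (A \<union> {i\<^sub>0} \<times> UNIV)"
proof -
  have rows: "weak_bounded mu (insert i\<^sub>0 M) \<theta> X
      (\<lambda>i. \<Sum>j\<in>N. (if (i, j) \<in> A \<union> {i\<^sub>0} \<times> UNIV then v i j else 0) * nu j)"
    by (rule weak_bounded_insert[where g = "\<lambda>i. \<Sum>j\<in>N. (if (i, j) \<in> A then v i j else 0) * nu j"])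
      (use assms in \<open>auto simp: weak_split_def intro!: sum.cong\<close>)
  have "(\<Sum>i\<in>insert i\<^sub>0 M. (if (i, j) \<in> A \<union> {i\<^sub>0} \<times> UNIV then 0 else v i j) * mu i)
      = (\<Sum>i\<in>M. (if (i, j) \<in> A then 0 else v i j) * mu i)" for j
    using assms by (auto intro: sum.cong)
  then show ?thesis
    using rows split by (simp add: weak_split_def)
qed

lemma weak_split_exists:
  fixes v :: "'a \<Rightarrow> 'b \<Rightarrow> real"
  assumes "finite M" "finite N" "\<forall>i\<in>M. mu i > 0" "\<forall>j\<in>N. nu j > 0" "\<theta> \<ge> 0" "X \<ge> 0" "Y \<ge> 0"
    and "\<And>E F. E \<subseteq> M \<Longrightarrow> F \<subseteq> N \<Longrightarrow> E \<noteq> {} \<Longrightarrow> F \<noteq> {} \<Longrightarrow>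
           (\<Sum>i\<in>E. \<Sum>j\<in>F. v i j * mu i * nu j)
             \<le> max (X * sum mu E powr (1 - \<theta>)) (Y * sum nu F powr (1 - \<theta>))"
  shows "\<exists>A. weak_split mu nu M N \<theta> X Y v A"
  using assms
proof (induction "card M + card N" arbitrary: M N rule: less_induct)
  case less
  note fin = less.prems(1,2) and pos = less.prems(3,4) and rect = less.prems(8)
  consider "M = {} \<or> N = {}"
    | (row) i\<^sub>0 where "i\<^sub>0 \<in> M" "(\<Sum>j\<in>N. v i\<^sub>0 j * nu j) \<le> X * sum mu M powr - \<theta>"
    | (column) j\<^sub>0 where "j\<^sub>0 \<in> N" "(\<Sum>i\<in>M. v i j\<^sub>0 * mu i) \<le> Y * sum nu N powr - \<theta>"
    using exists_light_row_or_column[of M N mu nu v X \<theta> Y] fin pos rect[of M N] by blast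
  then show ?case
  proof cases
    case 1
    then have "weak_split mu nu M N \<theta> X Y v {}"
      using less.prems by (auto simp: weak_split_def weak_bounded_zero)
    then show ?thesis ..
  next
    case row
    have "card (M - {i\<^sub>0}) + card N < card M + card N"
      using card_Diff1_less[OF fin(1) row(1)] by simp
    then obtain A where A: "weak_split mu nu (M - {i\<^sub>0}) N \<theta> X Y v A"
      using less.prems by (elim less.hyps[elim_format]) (auto intro: rect)
    have "weak_split mu nu M N \<theta> X Y v (A \<union> {i\<^sub>0} \<times> UNIV)"
      using weak_split_insert_row[OF A, of i\<^sub>0] row less.prems by (simp add: insert_absorb)
    then show ?thesis ..
  next
    case column
    have "card M + card (N - {j\<^sub>0}) < card M + card N"
      using card_Diff1_less[OF fin(2) column(1)] by simp
    then obtain A where "weak_split mu nu M (N - {j\<^sub>0}) \<theta> X Y v A"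
      using less.prems by (elim less.hyps[elim_format]) (auto intro: rect)
    then have A: "weak_split nu mu (N - {j\<^sub>0}) M \<theta> Y X (\<lambda>j i. v i j) {(j, i). (i, j) \<notin> A}"
      by (rule weak_split_transpose)
    have "weak_split nu mu N M \<theta> Y X (\<lambda>j i. v i j) ({(j, i). (i, j) \<notin> A} \<union> {j\<^sub>0} \<times> UNIV)"
      using weak_split_insert_row[OF A, of j\<^sub>0] column less.prems by (simp add: insert_absorb)
    then show ?thesis
      by (blast dest: weak_split_transpose)
  qed
qed

section \<open>The weak norm on a finite atomic measure space\<close>

lemma finite_strict_upper_bound:
  fixes g :: "'a \<Rightarrow> real"
  assumes "finite S"
  obtains G where "G > 0" "\<forall>i\<in>S. g i < G"
proof
  show "1 + (\<Sum>i\<in>S. \<bar>g i\<bar>) > 0"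
    by (simp add: add_pos_nonneg sum_nonneg)
  have "g i \<le> (\<Sum>i\<in>S. \<bar>g i\<bar>)" if "i \<in> S" for i
    using member_le_sum[of i S "\<lambda>i. \<bar>g i\<bar>"] assms that by simp
  then show "\<forall>i\<in>S. g i < 1 + (\<Sum>i\<in>S. \<bar>g i\<bar>)"
    by fastforce
qed

lemma rearr_le:
  assumes "lam > 0" "sum mu {i\<in>S. g i > lam} \<le> s"
  shows "rearr mu S g s \<le> lam"
  unfolding rearr_def
  by (rule cInf_lower) (use assms in \<open>auto intro!: bdd_belowI[where m = 0]\<close>)

lemma rearr_ge:
  assumes "finite S" "s \<ge> 0"
    and "\<And>lam. lam > 0 \<Longrightarrow> sum mu {i\<in>S. g i > lam} \<le> s \<Longrightarrow> v \<le> lam"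
  shows "v \<le> rearr mu S g s"
proof -
  obtain G where "G > 0" "\<forall>i\<in>S. g i < G"
    using finite_strict_upper_bound[OF assms(1)] .
  then have "sum mu {i\<in>S. g i > G} = 0"
    by (intro sum.neutral) auto
  then have "G \<in> {lam. lam > 0 \<and> sum mu {i\<in>S. g i > lam} \<le> s}"
    using \<open>G > 0\<close> assms(2) by simp
  then show ?thesis
    unfolding rearr_def by (intro cInf_greatest) (use assms(3) in auto)
qed

lemma rearr_nonneg: "finite S \<Longrightarrow> s \<ge> 0 \<Longrightarrow> rearr mu S g s \<ge> 0"
  by (rule rearr_ge) auto

lemma bdd_above_weak_profile:
  assumes fin: "finite S" and mu: "\<forall>i\<in>S. mu i > 0" and r: "r > 0"
  shows "bdd_above ((\<lambda>s. s powr (1 / r) * rearr mu S g s) ` {0<..})"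
proof -
  obtain G where G: "G > 0" "\<forall>i\<in>S. g i < G"
    using finite_strict_upper_bound[OF fin] .
  have "s powr (1 / r) * rearr mu S g s \<le> sum mu S powr (1 / r) * G" if s: "s > 0" for s
  proof (cases "s \<le> sum mu S")
    case True
    have "sum mu {i\<in>S. g i > G} = 0"
      using G by (intro sum.neutral) auto
    then have "rearr mu S g s \<le> G"
      using G s by (intro rearr_le) auto
    then show ?thesis
      using True s r rearr_nonneg[OF fin, of s mu g] by (intro mult_mono powr_mono2) auto
  next
    case False
    have "rearr mu S g s \<le> 0"
    proof (rule dense_ge)
      fix lam :: real assume "0 < lam"
      moreover have "sum mu {i\<in>S. g i > lam} \<le> sum mu S"
        using fin mu by (intro sum_mono2) auto
      ultimately show "rearr mu S g s \<le> lam"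
        using False by (intro rearr_le) auto
    qed
    then have "s powr (1 / r) * rearr mu S g s \<le> 0"
      by (simp add: mult_nonneg_nonpos)
    moreover have "0 \<le> sum mu S powr (1 / r) * G"
      using G by simp
    ultimately show ?thesis by linarith
  qed
  then show ?thesis
    by (intro bdd_aboveI2) auto
qed

lemma Min_le_rearr:
  assumes fin: "finite S" and mu: "\<forall>i\<in>S. mu i > 0" and E: "E \<subseteq> S" "E \<noteq> {}"
    and s: "0 \<le> s" "s < sum mu E"
  shows "Min (g ` E) \<le> rearr mu S g s"
proof (rule rearr_ge[OF fin s(1)])
  fix lam assume lam: "lam > 0" "sum mu {i\<in>S. g i > lam} \<le> s"
  show "Min (g ` E) \<le> lam"
  proof (rule ccontr)
    assume lam_small: "\<not> Min (g ` E) \<le> lam"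
    have "finite E"
      using E fin finite_subset by blast
    then have "Min (g ` E) \<le> g k" if "k \<in> E" for k
      using that by simp
    then have "E \<subseteq> {i\<in>S. g i > lam}"
      using E lam_small by force
    then have "sum mu E \<le> sum mu {i\<in>S. g i > lam}"
      using fin mu by (intro sum_mono2) auto
    then show False
      using s lam by simp
  qed
qed

lemma weak_bounded_if_weak_profile_le:
  assumes fin: "finite S" and mu: "\<forall>i\<in>S. mu i > 0" and r: "r > 0" and W: "W \<ge> 0"
    and profile: "\<And>s. s > 0 \<Longrightarrow> s powr (1 / r) * rearr mu S g s \<le> W"
  shows "weak_bounded mu S (1 / r) W g"
  unfolding weak_bounded_def
proof (intro allI impI)
  fix E assume E: "E \<subseteq> S" "E \<noteq> {}"
  define gmin where "gmin = Min (g ` E)"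
  have "finite E"
    using E fin finite_subset by blast
  then have "gmin \<in> g ` E"
    unfolding gmin_def using E by (intro Min_in) auto
  then obtain i where i: "i \<in> E" "g i = gmin" by auto
  have "gmin \<le> W * sum mu E powr - (1 / r)"
  proof (cases "gmin > 0")
    case True
    have "sum mu E \<le> (W / gmin) powr r"
    proof (rule dense_le_bounded)
      show "0 < sum mu E"
        using sum_pos_subset[OF fin mu E] .
    next
      fix s assume s: "0 < s" "s < sum mu E"
      have "s powr (1 / r) * gmin \<le> s powr (1 / r) * rearr mu S g s"
        using Min_le_rearr[OF fin mu E, of s g] s unfolding gmin_def by (intro mult_left_mono) auto
      then have "(s powr (1 / r)) powr r \<le> (W / gmin) powr r"
        using profile[OF s(1)] True r by (intro powr_mono2) (auto simp: field_simps)
      then show "s \<le> (W / gmin) powr r"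
        using s r by (simp add: powr_powr)
    qed
    then have "sum mu E powr (1 / r) \<le> ((W / gmin) powr r) powr (1 / r)"
      using r sum_pos_subset[OF fin mu E] by (intro powr_mono2) auto
    then have "sum mu E powr (1 / r) \<le> W / gmin"
      using r W True by (simp add: powr_powr)
    then show ?thesis
      using True sum_pos_subset[OF fin mu E] by (simp add: powr_minus_divide field_simps)
  next
    case False
    have "0 \<le> W * sum mu E powr - (1 / r)"
      using W by simp
    then show ?thesis
      using False by linarith
  qed
  then show "\<exists>i\<in>E. g i \<le> W * sum mu E powr - (1 / r)"
    using i by auto
qed

lemma weak_profile_le_if_weak_bounded:
  assumes r: "r > 0" and W: "W \<ge> 0" and bounded: "weak_bounded mu S (1 / r) W g" and s: "s > 0"
  shows "s powr (1 / r) * rearr mu S g s \<le> W"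
proof -
  have "rearr mu S g s \<le> W * s powr - (1 / r)"
  proof (rule dense_ge)
    fix lam assume lam: "W * s powr - (1 / r) < lam"
    have "0 \<le> W * s powr - (1 / r)"
      using W by simp
    with lam have "lam > 0" by linarith
    moreover have "sum mu {i\<in>S. g i > lam} \<le> s"
    proof (rule ccontr)
      let ?D = "{i\<in>S. g i > lam}"
      assume "\<not> sum mu ?D \<le> s"
      then have big: "sum mu ?D > s" by simp
      have "?D \<noteq> {}"
      proof
        assume empty: "?D = {}"
        have "sum mu ?D = 0" by (simp only: empty sum.empty)
        then show False using big s by simp
      qed
      then obtain i where i: "i \<in> ?D" "g i \<le> W * sum mu ?D powr - (1 / r)"
        using weak_boundedD[OF bounded, of ?D] by auto
      have "sum mu ?D powr - (1 / r) \<le> s powr - (1 / r)"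
        using big s r by (intro powr_mono2') auto
      then have "W * sum mu ?D powr - (1 / r) \<le> W * s powr - (1 / r)"
        using W by (rule mult_left_mono)
      then show False using i lam by simp
    qed
    ultimately show "rearr mu S g s \<le> lam"
      by (rule rearr_le)
  qed
  then have "s powr (1 / r) * rearr mu S g s \<le> s powr (1 / r) * (W * s powr - (1 / r))"
    by (rule mult_left_mono) simp
  also have "\<dots> = W * (s powr (1 / r) * s powr - (1 / r))"
    by (simp add: mult_ac)
  also have "\<dots> = W"
    using s by (simp flip: powr_add)
  finally show ?thesis .
qed

lemma weak_norm_le_iff:
  assumes fin: "finite S" "S \<noteq> {}" and mu: "\<forall>i\<in>S. mu i > 0" and p: "0 < p" and W: "W \<ge> 0"
  shows "weak_norm mu S p g \<le> W \<longleftrightarrow> weak_bounded mu S (inv_exp p) W g"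
proof (cases p)
  case PInf
  have "weak_bounded mu S 0 W g \<longleftrightarrow> (\<forall>i\<in>S. g i \<le> W)"
  proof
    assume bounded: "weak_bounded mu S 0 W g"
    show "\<forall>i\<in>S. g i \<le> W"
    proof
      fix i assume "i \<in> S"
      then have "mu i > 0" using mu by blast
      then show "g i \<le> W"
        using weak_boundedD[OF bounded, of "{i}"] \<open>i \<in> S\<close> by simp
    qed
  next
    assume le: "\<forall>i\<in>S. g i \<le> W"
    show "weak_bounded mu S 0 W g"
      unfolding weak_bounded_def
    proof (intro allI impI)
      fix E assume E: "E \<subseteq> S" "E \<noteq> {}"
      then obtain i where "i \<in> E" by blast
      then show "\<exists>i\<in>E. g i \<le> W * sum mu E powr - 0"
        using le E sum_pos_subset[OF fin(1) mu E] by auto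
    qed
  qed
  then show ?thesis
    using fin by (simp add: weak_norm_def inv_exp_def PInf cSUP_le_iff bdd_above_finite)
next
  case (real r)
  with p have "r > 0" by simp
  then have "weak_norm mu S p g \<le> W \<longleftrightarrow> (\<forall>s>0. s powr (1 / r) * rearr mu S g s \<le> W)"
    using bdd_above_weak_profile[OF fin(1) mu] by (auto simp: weak_norm_def real cSUP_le_iff)
  also have "\<dots> \<longleftrightarrow> weak_bounded mu S (1 / r) W g"
    using weak_bounded_if_weak_profile_le[OF fin(1) mu \<open>r > 0\<close> W]
      weak_profile_le_if_weak_bounded[OF \<open>r > 0\<close> W] by auto
  also have "\<dots> \<longleftrightarrow> weak_bounded mu S (inv_exp p) W g"
    by (simp add: inv_exp_def real)
  finally show ?thesis .
qed (use p in simp)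

lemma weak_norm_nonneg:
  assumes fin: "finite S" "S \<noteq> {}" and mu: "\<forall>i\<in>S. mu i > 0" and p: "0 < p"
    and g: "\<forall>i\<in>S. g i \<ge> 0"
  shows "weak_norm mu S p g \<ge> 0"
proof (cases p)
  case PInf
  obtain i where "i \<in> S" using fin(2) by blast
  then show ?thesis
    using fin g by (simp add: weak_norm_def PInf cSUP_upper2 bdd_above_finite)
next
  case (real r)
  with p have "r > 0" by simp
  have "0 \<le> 1 powr (1 / r) * rearr mu S g 1"
    using rearr_nonneg[OF fin(1)] by simp
  also have "\<dots> \<le> (SUP s\<in>{0<..}. s powr (1 / r) * rearr mu S g s)"
    using bdd_above_weak_profile[OF fin(1) mu \<open>r > 0\<close>] by (intro cSUP_upper) auto
  finally show ?thesis
    by (simp add: weak_norm_def real)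
qed (use p in simp)

section \<open>Minkowski's inequality for weighted finite sums\<close>

lemma minkowski_normalized:
  fixes u v c :: "'a \<Rightarrow> real"
  assumes nonneg: "\<forall>k\<in>I. u k \<ge> 0 \<and> v k \<ge> 0 \<and> c k \<ge> 0" and q: "q \<ge> 1"
    and X: "X > 0" "(\<Sum>k\<in>I. u k powr q * c k) \<le> X powr q"
    and Y: "Y > 0" "(\<Sum>k\<in>I. v k powr q * c k) \<le> Y powr q"
  shows "(\<Sum>k\<in>I. (u k + v k) powr q * c k) \<le> (X + Y) powr q"
proof -
  define \<theta> where "\<theta> = Y / (X + Y)"
  have XY: "X + Y \<noteq> 0" using X Y by simp
  have \<theta>: "0 \<le> \<theta>" "\<theta> \<le> 1" "1 - \<theta> = X / (X + Y)"
    using X Y by (auto simp: \<theta>_def field_simps)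
  have pointwise: "(u k + v k) powr q
      \<le> (X + Y) powr q * ((1 - \<theta>) * u k powr q / X powr q + \<theta> * v k powr q / Y powr q)"
    if "k \<in> I" for k
  proof -
    have "(1 - \<theta>) * (u k / X) + \<theta> * (v k / Y) = (u k + v k) / (X + Y)"
      using X Y unfolding \<theta>(3) unfolding \<theta>_def by (simp add: add_divide_distrib)
    then have "u k + v k = (X + Y) * ((1 - \<theta>) * (u k / X) + \<theta> * (v k / Y))"
      using XY by simp
    then have "(u k + v k) powr q = (X + Y) powr q * ((1 - \<theta>) * (u k / X) + \<theta> * (v k / Y)) powr q"
      using X Y \<theta> nonneg that by (simp add: powr_mult)
    also have "\<dots> \<le> (X + Y) powr q * ((1 - \<theta>) * (u k / X) powr q + \<theta> * (v k / Y) powr q)"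
      using powr_convex_combination_le[of "u k / X" "v k / Y" \<theta> q] X Y \<theta> nonneg that q
      by (intro mult_left_mono) auto
    finally show ?thesis
      by (simp add: powr_divide)
  qed
  have "(\<Sum>k\<in>I. (u k + v k) powr q * c k)
      \<le> (\<Sum>k\<in>I. (X + Y) powr q * ((1 - \<theta>) * u k powr q / X powr q + \<theta> * v k powr q / Y powr q) * c k)"
    using pointwise nonneg by (intro sum_mono mult_right_mono) auto
  also have "\<dots> = (X + Y) powr q * ((1 - \<theta>) * ((\<Sum>k\<in>I. u k powr q * c k) / X powr q)
                                    + \<theta> * ((\<Sum>k\<in>I. v k powr q * c k) / Y powr q))"
    by (simp add: sum_distrib_left sum_distrib_right sum_divide_distrib sum.distrib algebra_simps)
  also have "\<dots> \<le> (X + Y) powr q * ((1 - \<theta>) * 1 + \<theta> * 1)"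
    using X Y \<theta> by (intro mult_left_mono add_mono) (auto simp: divide_le_eq_1)
  finally show ?thesis by simp
qed

lemma minkowski_sum_powr:
  fixes u v c :: "'a \<Rightarrow> real"
  assumes nonneg: "\<forall>k\<in>I. u k \<ge> 0 \<and> v k \<ge> 0 \<and> c k \<ge> 0" and q: "q \<ge> 1"
  shows "(\<Sum>k\<in>I. (u k + v k) powr q * c k) powr (1 / q)
     \<le> (\<Sum>k\<in>I. u k powr q * c k) powr (1 / q) + (\<Sum>k\<in>I. v k powr q * c k) powr (1 / q)"
    (is "?S powr _ \<le> ?U + ?V")
proof (rule field_le_epsilon)
  fix e :: real assume "e > 0"
  have root: "(\<Sum>k\<in>I. w k powr q * c k) \<le> ((\<Sum>k\<in>I. w k powr q * c k) powr (1 / q) + e / 2) powr q"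
    if "\<forall>k\<in>I. w k \<ge> 0" for w
  proof -
    have "(\<Sum>k\<in>I. w k powr q * c k) = ((\<Sum>k\<in>I. w k powr q * c k) powr (1 / q)) powr q"
      using nonneg q by (simp add: powr_powr sum_nonneg)
    also have "\<dots> \<le> ((\<Sum>k\<in>I. w k powr q * c k) powr (1 / q) + e / 2) powr q"
      using q \<open>e > 0\<close> by (intro powr_mono2) auto
    finally show ?thesis .
  qed
  have "?S \<le> ((?U + e / 2) + (?V + e / 2)) powr q"
    using nonneg q \<open>e > 0\<close> root[of u] root[of v]
    by (intro minkowski_normalized) (auto intro: add_nonneg_pos)
  then have "?S powr (1 / q) \<le> (((?U + e / 2) + (?V + e / 2)) powr q) powr (1 / q)"
    using nonneg q by (intro powr_mono2) (auto intro: sum_nonneg)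
  also have "\<dots> = ?U + ?V + e"
    using q \<open>e > 0\<close> by (simp add: powr_powr add_nonneg_pos)
  finally show "?S powr (1 / q) \<le> ?U + ?V + e" .
qed

lemma lq_norm_triangle:
  assumes mu: "\<forall>i\<in>{1..m}. mu i > 0" and nu: "\<forall>j\<in>{1..n}. nu j > 0" and q: "q \<ge> 1"
    and le: "\<forall>i\<in>{1..m}. \<forall>j\<in>{1..n}. \<bar>x i j\<bar> \<le> \<bar>y i j\<bar> + \<bar>z i j\<bar>"
  shows "lq_norm m n mu nu q x \<le> lq_norm m n mu nu q y + lq_norm m n mu nu q z"
proof -
  define I where "I = {1..m} \<times> {1..n}"
  define c where "c k = mu (fst k) * nu (snd k)" for k
  have flat: "lq_norm m n mu nu q a = (\<Sum>k\<in>I. \<bar>a (fst k) (snd k)\<bar> powr q * c k) powr (1 / q)" for a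
    unfolding lq_norm_def I_def c_def by (simp add: sum.cartesian_product case_prod_beta mult.assoc)
  have nonneg: "\<forall>k\<in>I. \<bar>y (fst k) (snd k)\<bar> \<ge> 0 \<and> \<bar>z (fst k) (snd k)\<bar> \<ge> 0 \<and> c k \<ge> 0"
    using mu nu by (auto simp: I_def c_def less_imp_le)
  have "(\<Sum>k\<in>I. \<bar>x (fst k) (snd k)\<bar> powr q * c k)
      \<le> (\<Sum>k\<in>I. (\<bar>y (fst k) (snd k)\<bar> + \<bar>z (fst k) (snd k)\<bar>) powr q * c k)"
    using le nonneg q by (intro sum_mono mult_right_mono powr_mono2) (auto simp: I_def)
  then have "lq_norm m n mu nu q x
      \<le> (\<Sum>k\<in>I. (\<bar>y (fst k) (snd k)\<bar> + \<bar>z (fst k) (snd k)\<bar>) powr q * c k) powr (1 / q)"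
    unfolding flat using nonneg q by (intro powr_mono2) (auto intro!: sum_nonneg)
  also have "\<dots> \<le> lq_norm m n mu nu q y + lq_norm m n mu nu q z"
    unfolding flat using nonneg q by (rule minkowski_sum_powr)
  finally show ?thesis .
qed

section \<open>Mixed norms of matrices\<close>

lemma col_norm_eq_row_norm_transpose:
  "col_norm m n mu nu p q a = row_norm n m nu mu p q (\<lambda>j i. a i j)"
  by (simp add: col_norm_def row_norm_def)

lemma lq_norm_mask_rect:
  assumes "E \<subseteq> {1..m}" "F \<subseteq> {1..n}"
  shows "lq_norm m n mu nu q (mask (E \<times> F) a)
       = (\<Sum>i\<in>E. \<Sum>j\<in>F. \<bar>a i j\<bar> powr q * mu i * nu j) powr (1 / q)"
proof -
  have "(\<Sum>i\<in>{1..m}. \<Sum>j\<in>{1..n}. \<bar>mask (E \<times> F) a i j\<bar> powr q * mu i * nu j)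
      = (\<Sum>i\<in>{1..m}. if i \<in> E then \<Sum>j\<in>{1..n}. if j \<in> F then \<bar>a i j\<bar> powr q * mu i * nu j else 0 else 0)"
    by (auto simp: mask_def intro!: sum.cong)
  also have "\<dots> = (\<Sum>i\<in>E. \<Sum>j\<in>F. \<bar>a i j\<bar> powr q * mu i * nu j)"
    using assms by (simp add: sum.inter_restrict[symmetric] Int_absorb1)
  finally show ?thesis
    by (simp add: lq_norm_def)
qed

locale weak_mixed_norms =
  fixes m n :: nat and mu nu :: "nat \<Rightarrow> real" and p :: ereal and q :: real
  assumes m_pos: "1 \<le> m" and n_pos: "1 \<le> n"
    and mu_pos: "\<forall>i\<in>{1..m}. mu i > 0" and nu_pos: "\<forall>j\<in>{1..n}. nu j > 0"
    and q_ge_1: "1 \<le> q" and q_less_p: "ereal q < p"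
begin

sublocale transposed: weak_mixed_norms n m nu mu p q
  using m_pos n_pos mu_pos nu_pos q_ge_1 q_less_p by unfold_locales

abbreviation \<beta> :: real where
  "\<beta> \<equiv> 1 - q * inv_exp p"

lemma p_pos: "0 < p"
  using q_ge_1 q_less_p by (cases p) auto

lemma beta_pos: "0 < \<beta>" and beta_le_one: "\<beta> \<le> 1"
  using q_ge_1 q_less_p by (cases p; simp add: inv_exp_def field_simps)+

lemma Cpq_pos: "Cpq p q > 0"
  using beta_pos by (simp add: Cpq_def)

lemma row_norm_nonneg: "row_norm m n mu nu p q a \<ge> 0"
  unfolding row_norm_def using m_pos mu_pos p_pos by (intro weak_norm_nonneg) auto

lemma row_norm_le_iff:
  assumes "W \<ge> 0"
  shows "row_norm m n mu nu p q a \<le> W \<longleftrightarrow>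
    weak_bounded mu {1..m} (1 - \<beta>) (W powr q) (\<lambda>i. \<Sum>j\<in>{1..n}. \<bar>a i j\<bar> powr q * nu j)"
proof -
  let ?r = "\<lambda>i. (\<Sum>j\<in>{1..n}. \<bar>a i j\<bar> powr q * nu j) powr (1 / q)"
  have "row_norm m n mu nu p q a \<le> W \<longleftrightarrow> weak_bounded mu {1..m} (inv_exp p) W ?r"
    unfolding row_norm_def using m_pos mu_pos p_pos assms by (intro weak_norm_le_iff) auto
  also have "\<dots> \<longleftrightarrow> weak_bounded mu {1..m} (q * inv_exp p) (W powr q) (\<lambda>i. ?r i powr q)"
    using q_ge_1 assms by (intro weak_bounded_powr_iff[symmetric]) auto
  also have "(\<lambda>i. ?r i powr q) = (\<lambda>i. \<Sum>j\<in>{1..n}. \<bar>a i j\<bar> powr q * nu j)"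
  proof
    fix i
    have "(\<Sum>j\<in>{1..n}. \<bar>a i j\<bar> powr q * nu j) \<ge> 0"
      using nu_pos by (intro sum_nonneg) (auto simp: less_imp_le)
    then show "?r i powr q = (\<Sum>j\<in>{1..n}. \<bar>a i j\<bar> powr q * nu j)"
      using q_ge_1 by (simp add: powr_powr)
  qed
  finally show ?thesis by simp
qed

lemma rect_sum_le_row_norm:
  assumes E: "E \<subseteq> {1..m}" and F: "F \<subseteq> {1..n}"
  shows "\<beta> * (\<Sum>i\<in>E. \<Sum>j\<in>F. \<bar>a i j\<bar> powr q * mu i * nu j)
           \<le> row_norm m n mu nu p q a powr q * sum mu E powr \<beta>"
proof -
  let ?W = "row_norm m n mu nu p q a"
  have "weak_bounded mu {1..m} (1 - \<beta>) (?W powr q) (\<lambda>i. \<Sum>j\<in>{1..n}. \<bar>a i j\<bar> powr q * nu j)"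
    using row_norm_le_iff[of ?W a] row_norm_nonneg by simp
  then have "\<beta> * (\<Sum>i\<in>E. mu i * (\<Sum>j\<in>{1..n}. \<bar>a i j\<bar> powr q * nu j)) \<le> ?W powr q * sum mu E powr \<beta>"
    using mu_pos beta_pos beta_le_one E by (intro weak_bounded_sum_le) auto
  moreover have "(\<Sum>j\<in>F. \<bar>a i j\<bar> powr q * mu i * nu j) \<le> mu i * (\<Sum>j\<in>{1..n}. \<bar>a i j\<bar> powr q * nu j)"
    if "i \<in> E" for i
  proof -
    have "(\<Sum>j\<in>F. \<bar>a i j\<bar> powr q * nu j) \<le> (\<Sum>j\<in>{1..n}. \<bar>a i j\<bar> powr q * nu j)"
      using F nu_pos by (intro sum_mono2) (auto simp: less_imp_le)
    then have "mu i * (\<Sum>j\<in>F. \<bar>a i j\<bar> powr q * nu j) \<le> mu i * (\<Sum>j\<in>{1..n}. \<bar>a i j\<bar> powr q * nu j)"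
      using mu_pos that E by (intro mult_left_mono) (auto simp: less_imp_le subset_iff)
    then show ?thesis
      by (simp add: sum_distrib_left mult_ac)
  qed
  then have "\<beta> * (\<Sum>i\<in>E. \<Sum>j\<in>F. \<bar>a i j\<bar> powr q * mu i * nu j)
      \<le> \<beta> * (\<Sum>i\<in>E. mu i * (\<Sum>j\<in>{1..n}. \<bar>a i j\<bar> powr q * nu j))"
    using beta_pos by (intro mult_left_mono sum_mono) auto
  ultimately show ?thesis by linarith
qed

end

text \<open>The context is reopened so that the lemmas above are also available for the
  transposed instance.\<close>

context weak_mixed_norms
begin

lemma col_norm_nonneg: "col_norm m n mu nu p q a \<ge> 0"
  by (simp add: col_norm_eq_row_norm_transpose transposed.row_norm_nonneg)

lemma rect_sum_le_col_norm:
  assumes E: "E \<subseteq> {1..m}" and F: "F \<subseteq> {1..n}"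
  shows "\<beta> * (\<Sum>i\<in>E. \<Sum>j\<in>F. \<bar>a i j\<bar> powr q * mu i * nu j)
           \<le> col_norm m n mu nu p q a powr q * sum nu F powr \<beta>"
proof -
  have "(\<Sum>j\<in>F. \<Sum>i\<in>E. \<bar>a i j\<bar> powr q * nu j * mu i) = (\<Sum>i\<in>E. \<Sum>j\<in>F. \<bar>a i j\<bar> powr q * mu i * nu j)"
    by (subst sum.swap) (simp add: mult_ac)
  then show ?thesis
    using transposed.rect_sum_le_row_norm[OF F E, of "\<lambda>j i. a i j"]
    by (simp add: col_norm_eq_row_norm_transpose)
qed

lemma rect_sum_nonneg:
  "E \<subseteq> {1..m} \<Longrightarrow> F \<subseteq> {1..n} \<Longrightarrow> 0 \<le> (\<Sum>i\<in>E. \<Sum>j\<in>F. \<bar>a i j\<bar> powr q * mu i * nu j)"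
  using mu_pos nu_pos by (intro sum_nonneg mult_nonneg_nonneg) (auto simp: subset_iff less_imp_le)

lemma Cpq_lq_norm_rect_le_row_norm:
  assumes "E \<subseteq> {1..m}" "F \<subseteq> {1..n}"
  shows "Cpq p q * lq_norm m n mu nu q (mask (E \<times> F) a) \<le> row_norm m n mu nu p q a * sum mu E powr (\<beta> / q)"
  unfolding Cpq_def lq_norm_mask_rect[OF assms]
  using q_ge_1 beta_pos rect_sum_nonneg[OF assms] row_norm_nonneg rect_sum_le_row_norm[OF assms]
  by (intro powr_root_le) auto

lemma Cpq_lq_norm_rect_le_col_norm:
  assumes "E \<subseteq> {1..m}" "F \<subseteq> {1..n}"
  shows "Cpq p q * lq_norm m n mu nu q (mask (E \<times> F) a) \<le> col_norm m n mu nu p q a * sum nu F powr (\<beta> / q)"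
  unfolding Cpq_def lq_norm_mask_rect[OF assms]
  using q_ge_1 beta_pos rect_sum_nonneg[OF assms] col_norm_nonneg rect_sum_le_col_norm[OF assms]
  by (intro powr_root_le) auto

lemma alpha_eq: "1 / q - inv_exp p = \<beta> / q"
  using q_ge_1 by (simp add: field_simps)

lemma finite_rectangles:
  "finite {(E, F). E \<subseteq> {1..m} \<and> E \<noteq> {} \<and> F \<subseteq> {1..n} \<and> F \<noteq> {}}"
  by (rule finite_subset[of _ "Pow {1..m} \<times> Pow {1..n}"]) auto

lemma rect_weight_pos:
  assumes "t > 0" "E \<subseteq> {1..m}" "E \<noteq> {}"
  shows "max (sum mu E powr (\<beta> / q)) (sum nu F powr (\<beta> / q) / t) > 0"
  using sum_pos_subset[of "{1..m}" mu E] assms mu_pos by (simp add: less_max_iff_disj)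

lemma lq_norm_rect_le_triple_norm:
  assumes "t > 0" "E \<subseteq> {1..m}" "E \<noteq> {}" "F \<subseteq> {1..n}" "F \<noteq> {}"
  shows "lq_norm m n mu nu q (mask (E \<times> F) a)
    \<le> triple_norm m n mu nu p q t a * max (sum mu E powr (\<beta> / q)) (sum nu F powr (\<beta> / q) / t)"
proof -
  let ?D = "max (sum mu E powr (\<beta> / q)) (sum nu F powr (\<beta> / q) / t)"
  have "lq_norm m n mu nu q (mask (E \<times> F) a) / ?D \<le> triple_norm m n mu nu p q t a"
    unfolding triple_norm_def Let_def alpha_eq
    using assms finite_rectangles by (intro cSUP_upper2[where x = "(E, F)"]) auto
  then show ?thesis
    using rect_weight_pos[OF assms(1-3)] by (simp add: divide_le_eq)
qed

lemma triple_norm_le: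
  assumes "t > 0"
    and "\<And>E F. E \<subseteq> {1..m} \<Longrightarrow> E \<noteq> {} \<Longrightarrow> F \<subseteq> {1..n} \<Longrightarrow> F \<noteq> {} \<Longrightarrow>
           lq_norm m n mu nu q (mask (E \<times> F) a)
             \<le> c * max (sum mu E powr (\<beta> / q)) (sum nu F powr (\<beta> / q) / t)"
  shows "triple_norm m n mu nu p q t a \<le> c"
  unfolding triple_norm_def Let_def alpha_eq
proof (rule cSUP_least)
  show "{(E, F). E \<subseteq> {1..m} \<and> E \<noteq> {} \<and> F \<subseteq> {1..n} \<and> F \<noteq> {}} \<noteq> {}"
    using m_pos n_pos by (auto intro!: exI[of _ "{1}"])
next
  fix EF assume "EF \<in> {(E, F). E \<subseteq> {1..m} \<and> E \<noteq> {} \<and> F \<subseteq> {1..n} \<and> F \<noteq> {}}"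
  then obtain E F where "EF = (E, F)" "E \<subseteq> {1..m}" "E \<noteq> {}" "F \<subseteq> {1..n}" "F \<noteq> {}"
    by auto
  then show "lq_norm m n mu nu q (mask (fst EF \<times> snd EF) a)
      / max (sum mu (fst EF) powr (\<beta> / q)) (sum nu (snd EF) powr (\<beta> / q) / t) \<le> c"
    using assms(2)[of E F] rect_weight_pos[OF assms(1), of E F] by (simp add: divide_le_eq)
qed

lemma triple_norm_nonneg:
  assumes "t > 0"
  shows "triple_norm m n mu nu p q t a \<ge> 0"
proof (rule ccontr)
  let ?D = "max (sum mu {1} powr (\<beta> / q)) (sum nu {1} powr (\<beta> / q) / t)"
  assume "\<not> triple_norm m n mu nu p q t a \<ge> 0"
  then have "triple_norm m n mu nu p q t a * ?D < 0"
    using rect_weight_pos[OF assms, of "{1}" "{1}"] m_pos by (simp add: mult_neg_pos)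
  moreover have "0 \<le> lq_norm m n mu nu q (mask ({1} \<times> {1}) a)"
    by (simp add: lq_norm_def)
  moreover have "lq_norm m n mu nu q (mask ({1} \<times> {1}) a) \<le> triple_norm m n mu nu p q t a * ?D"
    using assms m_pos n_pos by (intro lq_norm_rect_le_triple_norm) auto
  ultimately show False by linarith
qed

lemma K_func_le:
  assumes "t > 0" "\<forall>i\<in>{1..m}. \<forall>j\<in>{1..n}. a i j = b i j + c i j"
  shows "K_func m n mu nu p q t a \<le> row_norm m n mu nu p q b + t * col_norm m n mu nu p q c"
  unfolding K_func_def
  by (rule cInf_lower)
    (use assms row_norm_nonneg col_norm_nonneg in \<open>auto intro!: bdd_belowI[where m = 0]\<close>)

lemma K_func_ge:
  assumes "\<And>b c. \<forall>i\<in>{1..m}. \<forall>j\<in>{1..n}. a i j = b i j + c i j \<Longrightarrow>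
             x \<le> row_norm m n mu nu p q b + t * col_norm m n mu nu p q c"
  shows "x \<le> K_func m n mu nu p q t a"
  unfolding K_func_def
proof (rule cInf_greatest)
  show "{row_norm m n mu nu p q b + t * col_norm m n mu nu p q c |b c.
          \<forall>i\<in>{1..m}. \<forall>j\<in>{1..n}. a i j = b i j + c i j} \<noteq> {}"
  proof -
    have "row_norm m n mu nu p q a + t * col_norm m n mu nu p q (\<lambda>_ _. 0) \<in>
        {row_norm m n mu nu p q b + t * col_norm m n mu nu p q c |b c.
          \<forall>i\<in>{1..m}. \<forall>j\<in>{1..n}. a i j = b i j + c i j}"
      by (intro CollectI exI conjI refl) auto
    then show ?thesis by (metis empty_iff)
  qed
qed (use assms in auto)

lemma Cpq_triple_norm_le:
  assumes t: "t > 0" and split: "\<forall>i\<in>{1..m}. \<forall>j\<in>{1..n}. a i j = b i j + c i j"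
  shows "Cpq p q * triple_norm m n mu nu p q t a
           \<le> row_norm m n mu nu p q b + t * col_norm m n mu nu p q c"
proof -
  let ?K = "row_norm m n mu nu p q b + t * col_norm m n mu nu p q c"
  have "triple_norm m n mu nu p q t a \<le> ?K / Cpq p q"
  proof (rule triple_norm_le[OF t])
    fix E F assume E: "E \<subseteq> {1..m}" "E \<noteq> {}" and F: "F \<subseteq> {1..n}" "F \<noteq> {}"
    let ?D = "max (sum mu E powr (\<beta> / q)) (sum nu F powr (\<beta> / q) / t)"
    have "lq_norm m n mu nu q (mask (E \<times> F) a)
        \<le> lq_norm m n mu nu q (mask (E \<times> F) b) + lq_norm m n mu nu q (mask (E \<times> F) c)"
      using mu_pos nu_pos q_ge_1 split by (intro lq_norm_triangle) (auto simp: mask_def abs_triangle_ineq)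
    then have "Cpq p q * lq_norm m n mu nu q (mask (E \<times> F) a)
        \<le> Cpq p q * lq_norm m n mu nu q (mask (E \<times> F) b) + Cpq p q * lq_norm m n mu nu q (mask (E \<times> F) c)"
      using Cpq_pos by (simp flip: distrib_left)
    also have "\<dots> \<le> row_norm m n mu nu p q b * sum mu E powr (\<beta> / q)
                    + t * col_norm m n mu nu p q c * (sum nu F powr (\<beta> / q) / t)"
      using Cpq_lq_norm_rect_le_row_norm[OF E(1) F(1), of b]
        Cpq_lq_norm_rect_le_col_norm[OF E(1) F(1), of c] t
      by (simp add: add_mono)
    also have "\<dots> \<le> row_norm m n mu nu p q b * ?D + t * col_norm m n mu nu p q c * ?D"
      using row_norm_nonneg col_norm_nonneg t by (intro add_mono mult_left_mono) auto
    also have "\<dots> = ?K * ?D"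
      by (simp only: distrib_right)
    finally show "lq_norm m n mu nu q (mask (E \<times> F) a) \<le> ?K / Cpq p q * ?D"
      using Cpq_pos by (simp add: field_simps)
  qed
  then show ?thesis
    using Cpq_pos by (simp add: field_simps)
qed

lemma rect_sum_le_if_triple_norm_le:
  assumes t: "t > 0" and \<tau>: "\<tau> \<ge> 0" "triple_norm m n mu nu p q t a \<le> \<tau>"
    and E: "E \<subseteq> {1..m}" "E \<noteq> {}" and F: "F \<subseteq> {1..n}" "F \<noteq> {}"
  shows "(\<Sum>i\<in>E. \<Sum>j\<in>F. \<bar>a i j\<bar> powr q * mu i * nu j)
           \<le> max (\<tau> powr q * sum mu E powr \<beta>) ((\<tau> / t) powr q * sum nu F powr \<beta>)"
proof -
  let ?S = "\<Sum>i\<in>E. \<Sum>j\<in>F. \<bar>a i j\<bar> powr q * mu i * nu j"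
  have "?S powr (1 / q) \<le> triple_norm m n mu nu p q t a
      * max (sum mu E powr (\<beta> / q)) (sum nu F powr (\<beta> / q) / t)"
    using lq_norm_rect_le_triple_norm[OF t E F] lq_norm_mask_rect[OF E(1) F(1)] by simp
  also have "\<dots> \<le> \<tau> * max (sum mu E powr (\<beta> / q)) (sum nu F powr (\<beta> / q) / t)"
    using \<tau> rect_weight_pos[OF t E(1,2), of F] by (intro mult_right_mono) auto
  also have "\<dots> = max (\<tau> * sum mu E powr (\<beta> / q)) (\<tau> / t * sum nu F powr (\<beta> / q))"
    using \<tau>(1) by (simp add: max_mult_distrib_left)
  finally have "(?S powr (1 / q)) powr q
      \<le> max (\<tau> * sum mu E powr (\<beta> / q)) (\<tau> / t * sum nu F powr (\<beta> / q)) powr q"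
    using q_ge_1 by (intro powr_mono2) auto
  then show ?thesis
    using q_ge_1 \<tau> t rect_sum_nonneg[OF E(1) F(1), of a]
    by (simp add: powr_max powr_mult powr_powr powr_divide)
qed

lemma triple_norm_le_imp_split:
  assumes t: "t > 0" and \<tau>: "\<tau> \<ge> 0" "triple_norm m n mu nu p q t a \<le> \<tau>"
  shows "\<exists>A B. A \<union> B = {1..m} \<times> {1..n} \<and> A \<inter> B = {}
           \<and> row_norm m n mu nu p q (mask A a) \<le> \<tau> \<and> col_norm m n mu nu p q (mask B a) \<le> \<tau> / t"
proof -
  have "\<exists>A. weak_split mu nu {1..m} {1..n} (1 - \<beta>) (\<tau> powr q) ((\<tau> / t) powr q)
      (\<lambda>i j. \<bar>a i j\<bar> powr q) A"
    using mu_pos nu_pos beta_le_one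
    by (intro weak_split_exists) (simp_all add: rect_sum_le_if_triple_norm_le[OF t \<tau>])
  then obtain A where "weak_split mu nu {1..m} {1..n} (1 - \<beta>) (\<tau> powr q) ((\<tau> / t) powr q)
      (\<lambda>i j. \<bar>a i j\<bar> powr q) A" ..
  then have rows: "weak_bounded mu {1..m} (1 - \<beta>) (\<tau> powr q)
        (\<lambda>i. \<Sum>j\<in>{1..n}. (if (i, j) \<in> A then \<bar>a i j\<bar> powr q else 0) * nu j)"
    and cols: "weak_bounded nu {1..n} (1 - \<beta>) ((\<tau> / t) powr q)
        (\<lambda>j. \<Sum>i\<in>{1..m}. (if (i, j) \<in> A then 0 else \<bar>a i j\<bar> powr q) * mu i)"
    by (simp_all add: weak_split_def)
  define B where "B = {1..m} \<times> {1..n} - A"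
  have "row_norm m n mu nu p q (mask (A \<inter> {1..m} \<times> {1..n}) a) \<le> \<tau>"
    unfolding row_norm_le_iff[OF \<tau>(1)]
    using rows by (subst weak_bounded_cong) (auto simp: mask_def intro!: sum.cong)
  moreover have "col_norm m n mu nu p q (mask B a) \<le> \<tau> / t"
    unfolding col_norm_eq_row_norm_transpose transposed.row_norm_le_iff[OF divide_nonneg_pos[OF \<tau>(1) t]]
    using cols by (subst weak_bounded_cong) (auto simp: mask_def B_def intro!: sum.cong)
  ultimately show ?thesis
    by (intro exI[of _ "A \<inter> {1..m} \<times> {1..n}"] exI[of _ B]) (auto simp: B_def)
qed

end

theorem theorem2p5:
  fixes m n :: nat and mu nu :: "nat \<Rightarrow> real" and p :: ereal and q t :: real
    and a :: "nat \<Rightarrow> nat \<Rightarrow> real"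
  assumes "m \<ge> 1" and "n \<ge> 1"
    and "\<forall>i\<in>{1..m}. mu i > 0" and "\<forall>j\<in>{1..n}. nu j > 0"
    and "t > 0" and "1 \<le> q" and "ereal q < p"
  shows "Cpq p q * triple_norm m n mu nu p q t a \<le> K_func m n mu nu p q t a
       \<and> K_func m n mu nu p q t a \<le> 2 * triple_norm m n mu nu p q t a
       \<and> (triple_norm m n mu nu p q t a \<le> 1 \<longrightarrow>
            (\<exists>A B. A \<union> B = {1..m} \<times> {1..n} \<and> A \<inter> B = {}
               \<and> row_norm m n mu nu p q (mask A a) \<le> 1
               \<and> col_norm m n mu nu p q (mask B a) \<le> 1 / t))"
proof -
  interpret weak_mixed_norms m n mu nu p q
    using assms by unfold_locales
  note t = \<open>t > 0\<close>
  let ?T = "triple_norm m n mu nu p q t a"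
  have lower: "Cpq p q * ?T \<le> K_func m n mu nu p q t a"
    using Cpq_triple_norm_le[OF t] by (rule K_func_ge)
  obtain A B where AB: "A \<union> B = {1..m} \<times> {1..n}" "A \<inter> B = {}"
    and A: "row_norm m n mu nu p q (mask A a) \<le> ?T"
    and B: "col_norm m n mu nu p q (mask B a) \<le> ?T / t"
    using triple_norm_le_imp_split[OF t triple_norm_nonneg[OF t, of a] order_refl] by auto
  have "K_func m n mu nu p q t a \<le> row_norm m n mu nu p q (mask A a) + t * col_norm m n mu nu p q (mask B a)"
    using AB by (intro K_func_le[OF t]) (auto simp: mask_def)
  also have "\<dots> \<le> ?T + t * (?T / t)"
    using A B t by (intro add_mono mult_left_mono) auto
  also have "\<dots> = 2 * ?T"
    using t by simp
  finally show ?thesis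
    using lower triple_norm_le_imp_split[OF t zero_le_one] by simp
qed

end
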